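(* Let $(\Gamma,\Lambda)$ be a Hecke pair with $\Lambda$ finitely generated. Suppose there is a locally compact group $E$ and a homomorphism $\phi:\Gamma\to E$ such that $\phi|_\Lambda$ is a virtual uniform lattice embedding. Then $E$ is an engulfing group of $(\Gamma,\Lambda)$ and $\Lambda$ is uniformly commensurated in $\Gamma$.
   Context: A Hecke pair $(\Gamma,\Lambda)$ is a group with a commensurated subgroup. Virtual uniform lattice embedding: finite kernel, discrete cocompact image. $E$ is an engulfing group of $(\Gamma,\Lambda)$ if there are a virtual uniform lattice embedding $\rho:\Lambda\to E$ and a homomorphism $\Delta:\Gamma\to\mathrm{Aut}(E)$ extending $h\mapsto$ conjugation by $\rho(h)$ on $\Lambda$, such that for every $g\in\Gamma$, $\Delta(g)(\rho(h))=\rho(ghg^{-1})$ for all $h$ in some finite index subgroup of $\Lambda$. Uniformly commensurated: there are $K,A$ such that each element of the image of the conjugation map $\Gamma\to\mathrm{Comm}(\Lambda)\to\mathrm{QI}(\Lambda)$ is represented by a $(K,A)$-quasi-isometry of $\Lambda$ (word metric). *)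

theory Defs
  imports "HOL-Analysis.Analysis" "HOL-Algebra.Generated_Groups" "HOL-Algebra.Coset"
begin

definition conj_set :: "('a, 'm) monoid_scheme \<Rightarrow> 'a \<Rightarrow> 'a set \<Rightarrow> 'a set" where
  "conj_set G g H = (\<lambda>h. g \<otimes>\<^bsub>G\<^esub> h \<otimes>\<^bsub>G\<^esub> inv\<^bsub>G\<^esub> g) ` H"

definition finite_index_in :: "('a, 'm) monoid_scheme \<Rightarrow> 'a set \<Rightarrow> 'a set \<Rightarrow> bool" where
  "finite_index_in G H K \<longleftrightarrow> subgroup H G \<and> H \<subseteq> K \<and> finite ((\<lambda>k. H #>\<^bsub>G\<^esub> k) ` K)"

definition hecke_pair :: "('a, 'm) monoid_scheme \<Rightarrow> 'a set \<Rightarrow> bool" where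
  "hecke_pair G L \<longleftrightarrow> group G \<and> subgroup L G \<and>
     (\<forall>g \<in> carrier G. finite_index_in G (L \<inter> conj_set G g L) L
                     \<and> finite_index_in G (L \<inter> conj_set G g L) (conj_set G g L))"

definition finitely_generated_subgroup :: "('a, 'm) monoid_scheme \<Rightarrow> 'a set \<Rightarrow> bool" where
  "finitely_generated_subgroup G L \<longleftrightarrow> (\<exists>S. finite S \<and> S \<subseteq> L \<and> generate G S = L)"

definition topological_group :: "('b, 'n) monoid_scheme \<Rightarrow> 'b topology \<Rightarrow> bool" where
  "topological_group E T \<longleftrightarrow> group E \<and> topspace T = carrier E \<and>
     continuous_map (prod_topology T T) T (\<lambda>(x, y). x \<otimes>\<^bsub>E\<^esub> y) \<and>
     continuous_map T T (\<lambda>x. inv\<^bsub>E\<^esub> x)"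

definition locally_compact_group :: "('b, 'n) monoid_scheme \<Rightarrow> 'b topology \<Rightarrow> bool" where
  "locally_compact_group E T \<longleftrightarrow> topological_group E T \<and> Hausdorff_space T \<and> locally_compact_space T"

definition discrete_subgroup :: "('b, 'n) monoid_scheme \<Rightarrow> 'b topology \<Rightarrow> 'b set \<Rightarrow> bool" where
  "discrete_subgroup E T H \<longleftrightarrow> subgroup H E \<and> subtopology T H = discrete_topology H"

definition cocompact_subgroup :: "('b, 'n) monoid_scheme \<Rightarrow> 'b topology \<Rightarrow> 'b set \<Rightarrow> bool" where
  "cocompact_subgroup E T H \<longleftrightarrow> subgroup H E \<and>
     (\<exists>Q :: 'b set topology. quotient_map T Q (\<lambda>e. e <#\<^bsub>E\<^esub> H) \<and> compact_space Q)"

text \<open>rho : L \<rightarrow> E (L a subgroup of G) is a virtual uniform lattice embedding: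
  a homomorphism with finite kernel and discrete cocompact image.\<close>
definition vule :: "('a, 'm) monoid_scheme \<Rightarrow> 'a set \<Rightarrow> ('b, 'n) monoid_scheme \<Rightarrow> 'b topology
                    \<Rightarrow> ('a \<Rightarrow> 'b) \<Rightarrow> bool" where
  "vule G L E T \<rho> \<longleftrightarrow> \<rho> \<in> hom (G\<lparr>carrier := L\<rparr>) E \<and>
     finite {h \<in> L. \<rho> h = \<one>\<^bsub>E\<^esub>} \<and>
     discrete_subgroup E T (\<rho> ` L) \<and> cocompact_subgroup E T (\<rho> ` L)"

definition top_group_aut :: "('b, 'n) monoid_scheme \<Rightarrow> 'b topology \<Rightarrow> ('b \<Rightarrow> 'b) \<Rightarrow> bool" where
  "top_group_aut E T f \<longleftrightarrow> f \<in> hom E E \<and> bij_betw f (carrier E) (carrier E) \<and> homeomorphic_map T T f"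

definition engulfing_group ::
  "('a, 'm) monoid_scheme \<Rightarrow> 'a set \<Rightarrow> ('b, 'n) monoid_scheme \<Rightarrow> 'b topology \<Rightarrow> bool" where
  "engulfing_group G L E T \<longleftrightarrow>
    (\<exists>\<rho> (\<Delta> :: 'a \<Rightarrow> 'b \<Rightarrow> 'b).
       vule G L E T \<rho> \<and>
       \<comment> \<open>Delta : G \<rightarrow> Aut(E) is a homomorphism\<close>
       (\<forall>g \<in> carrier G. top_group_aut E T (\<Delta> g)) \<and>
       (\<forall>g1 \<in> carrier G. \<forall>g2 \<in> carrier G. \<forall>e \<in> carrier E.
           \<Delta> (g1 \<otimes>\<^bsub>G\<^esub> g2) e = \<Delta> g1 (\<Delta> g2 e)) \<and>
       \<comment> \<open>Delta extends h \<mapsto> conjugation by rho(h) on L\<close>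
       (\<forall>h \<in> L. \<forall>e \<in> carrier E. \<Delta> h e = \<rho> h \<otimes>\<^bsub>E\<^esub> e \<otimes>\<^bsub>E\<^esub> inv\<^bsub>E\<^esub> (\<rho> h)) \<and>
       \<comment> \<open>Delta(g)(rho(h)) = rho(g h g^-1) on a finite index subgroup of L\<close>
       (\<forall>g \<in> carrier G. \<exists>L'. finite_index_in G L' L \<and>
           (\<forall>h \<in> L'. g \<otimes>\<^bsub>G\<^esub> h \<otimes>\<^bsub>G\<^esub> inv\<^bsub>G\<^esub> g \<in> L \<and>
                     \<Delta> g (\<rho> h) = \<rho> (g \<otimes>\<^bsub>G\<^esub> h \<otimes>\<^bsub>G\<^esub> inv\<^bsub>G\<^esub> g))))"

definition word_length :: "('a, 'm) monoid_scheme \<Rightarrow> 'a set \<Rightarrow> 'a \<Rightarrow> nat" where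
  "word_length G S x = (LEAST n. \<exists>ws. length ws = n \<and>
       set ws \<subseteq> S \<union> (\<lambda>s. inv\<^bsub>G\<^esub> s) ` S \<and> foldr (\<lambda>a b. a \<otimes>\<^bsub>G\<^esub> b) ws \<one>\<^bsub>G\<^esub> = x)"

definition word_dist :: "('a, 'm) monoid_scheme \<Rightarrow> 'a set \<Rightarrow> 'a \<Rightarrow> 'a \<Rightarrow> real" where
  "word_dist G S x y = real (word_length G S (inv\<^bsub>G\<^esub> x \<otimes>\<^bsub>G\<^esub> y))"

definition quasi_isometry ::
  "('c \<Rightarrow> 'c \<Rightarrow> real) \<Rightarrow> 'c set \<Rightarrow> real \<Rightarrow> real \<Rightarrow> ('c \<Rightarrow> 'c) \<Rightarrow> bool" where
  "quasi_isometry d X K A f \<longleftrightarrow> K \<ge> 1 \<and> A \<ge> 0 \<and> f ` X \<subseteq> X \<and>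
     (\<forall>x \<in> X. \<forall>y \<in> X. d x y / K - A \<le> d (f x) (f y) \<and> d (f x) (f y) \<le> K * d x y + A) \<and>
     (\<forall>y \<in> X. \<exists>x \<in> X. d (f x) y \<le> A)"

text \<open>L is uniformly commensurated in G: there are K, A such that for every g in G, the
  quasi-isometry class of L determined by the commensuration
  h \<mapsto> g h g^-1 (defined on the finite index subgroup L \<inter> g^-1 L g) contains a
  (K,A)-quasi-isometry, i.e. some (K,A)-quasi-isometry f of L lies at bounded distance
  from h \<mapsto> g h g^-1 on L \<inter> g^-1 L g. The word metric is that of an arbitrary finite
  generating set S of L (the notion does not depend on S).\<close>
definition uniformly_commensurated :: "('a, 'm) monoid_scheme \<Rightarrow> 'a set \<Rightarrow> bool" where
  "uniformly_commensurated G L \<longleftrightarrow>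
    (\<forall>S. finite S \<and> S \<subseteq> L \<and> generate G S = L \<longrightarrow>
      (\<exists>K A. \<forall>g \<in> carrier G. \<exists>f. quasi_isometry (word_dist G S) L K A f \<and>
         (\<exists>C. \<forall>h \<in> L \<inter> conj_set G (inv\<^bsub>G\<^esub> g) L.
                word_dist G S (f h) (g \<otimes>\<^bsub>G\<^esub> h \<otimes>\<^bsub>G\<^esub> inv\<^bsub>G\<^esub> g) \<le> C)))"

end

theory Submission
  imports Defs
begin

text \<open>
  Conjugation by \<phi>(g) is a topological automorphism of E that restricts to conjugation on
  \<phi>(\<Lambda>), which makes E an engulfing group.

  For uniform commensuration, local compactness and cocompactness give a compact symmetric K
  with E = \<phi>(\<Lambda>) K. For c in E, send h in \<Lambda> to a lattice point x with \<phi>(x) in c \<phi>(h) K.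
  Since \<phi>(\<Lambda>) is discrete and the kernel is finite, only finitely many lattice points map
  into the compact sets K \<phi>(s) K, s a generator or 1; peeling off one generator at a time
  (as in the Milnor-Schwarz lemma) shows that \<phi>(x) \<in> K \<phi>(m) K forces |x| \<le> B (|m| + 1).
  Hence h \<mapsto> x is a quasi-isometry whose constants depend only on K and the generators, not
  on c; for c = \<phi>(g) it stays at bounded distance from h \<mapsto> g h g\<inverse>.
\<close>

lemma compactin_finite_subcover_indexed:
  assumes "compactin X S" and "\<And>i. i \<in> I \<Longrightarrow> openin X (N i)" and "S \<subseteq> (\<Union>i\<in>I. N i)"
  obtains F where "finite F" "F \<subseteq> I" "S \<subseteq> (\<Union>i\<in>F. N i)"
proof -
  obtain \<F> where "finite \<F>" "\<F> \<subseteq> N ` I" "S \<subseteq> \<Union>\<F>"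
    using compactinD[OF assms(1), of "N ` I"] assms(2,3) by blast
  moreover from this obtain F where "F \<subseteq> I" "finite F" "\<F> = N ` F"
    by (meson finite_subset_image)
  ultimately show thesis using that by blast
qed

lemma coarse_bilipschitz_bounds:
  fixes d d' B :: nat
  assumes "d' \<le> B * (d + 1)" and "d \<le> B * (d' + 1)"
  shows "real d / (real B + 1) - (real B + 1) \<le> real d'"
    and "real d' \<le> (real B + 1) * real d + (real B + 1)"
proof -
  have weaken: "real a \<le> (real B + 1) * (real b + 1)" if "a \<le> B * (b + 1)" for a b :: nat
  proof -
    have "real a \<le> real (B * (b + 1))"
      using that by (rule of_nat_mono)
    also have "\<dots> \<le> (real B + 1) * (real b + 1)"
      by (simp add: algebra_simps)
    finally show ?thesis .
  qed
  have "real d / (real B + 1) \<le> real d' + 1"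
    using weaken[OF assms(2)] by (simp add: divide_le_eq mult.commute)
  then show "real d / (real B + 1) - (real B + 1) \<le> real d'"
    by simp
  show "real d' \<le> (real B + 1) * real d + (real B + 1)"
    using weaken[OF assms(1)] by (simp add: algebra_simps)
qed

context group
begin

lemma inv_mult_cancel: "x \<in> carrier G \<Longrightarrow> y \<in> carrier G \<Longrightarrow> inv x \<otimes> (x \<otimes> y) = y"
  by (simp add: m_assoc [symmetric])

lemma mult_inv_cancel: "x \<in> carrier G \<Longrightarrow> y \<in> carrier G \<Longrightarrow> x \<otimes> (inv x \<otimes> y) = y"
  by (simp add: m_assoc [symmetric])

lemma conj_set_inv_conj_mem:
  assumes "g \<in> carrier G" and "L \<subseteq> carrier G" and "h \<in> conj_set G (inv g) L"
  shows "g \<otimes> h \<otimes> inv g \<in> L"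
  using assms by (auto simp: conj_set_def m_assoc mult_inv_cancel)

end

lemma (in group_hom) finite_subgroup_preimage:
  assumes "subgroup L G" and "finite {x \<in> L. h x = \<one>\<^bsub>H\<^esub>}" and "finite (h ` L \<inter> C)"
  shows "finite {x \<in> L. h x \<in> C}"
proof -
  have fibre: "finite {x \<in> L. h x = h x0}" if "x0 \<in> L" for x0
  proof -
    have "{x \<in> L. h x = h x0} \<subseteq> (\<lambda>k. x0 \<otimes> k) ` {x \<in> L. h x = \<one>\<^bsub>H\<^esub>}"
    proof
      fix x assume x: "x \<in> {x \<in> L. h x = h x0}"
      have carrier: "x \<in> carrier G" "x0 \<in> carrier G"
        using x that subgroup.subset[OF assms(1)] by auto
      have "inv x0 \<otimes> x \<in> L"
        using x that by (auto intro: subgroup.m_closed subgroup.m_inv_closed assms(1))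
      moreover have "h (inv x0 \<otimes> x) = \<one>\<^bsub>H\<^esub>"
        using x carrier by simp
      moreover have "x = x0 \<otimes> (inv x0 \<otimes> x)"
        using carrier by (simp add: G.mult_inv_cancel)
      ultimately show "x \<in> (\<lambda>k. x0 \<otimes> k) ` {x \<in> L. h x = \<one>\<^bsub>H\<^esub>}"
        by blast
    qed
    then show ?thesis
      using assms(2) by (rule finite_subset[OF _ finite_imageI])
  qed
  have "finite (h ` {x0 \<in> L. h x0 \<in> C})"
    using assms(3) by (rule finite_subset[rotated]) auto
  then have "finite (\<Union>e \<in> h ` {x0 \<in> L. h x0 \<in> C}. {x \<in> L. h x = e})"
    using fibre by (intro finite_UN_I) auto
  then show ?thesis
    by (rule finite_subset[rotated]) auto
qed

section \<open>Word length\<close>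

abbreviation word_letters :: "('a, 'm) monoid_scheme \<Rightarrow> 'a set \<Rightarrow> 'a set" where
  "word_letters G S \<equiv> S \<union> (\<lambda>s. inv\<^bsub>G\<^esub> s) ` S"

definition word_prod :: "('a, 'm) monoid_scheme \<Rightarrow> 'a list \<Rightarrow> 'a" where
  "word_prod G ws = foldr (\<lambda>a b. a \<otimes>\<^bsub>G\<^esub> b) ws \<one>\<^bsub>G\<^esub>"

context group
begin

lemma word_prod_Nil [simp]: "word_prod G [] = \<one>"
  by (simp add: word_prod_def)

lemma word_prod_Cons [simp]: "word_prod G (a # ws) = a \<otimes> word_prod G ws"
  by (simp add: word_prod_def)

lemma word_prod_closed: "set ws \<subseteq> carrier G \<Longrightarrow> word_prod G ws \<in> carrier G"
  by (induction ws) auto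

lemma word_prod_append:
  "set xs \<subseteq> carrier G \<Longrightarrow> set ys \<subseteq> carrier G \<Longrightarrow>
   word_prod G (xs @ ys) = word_prod G xs \<otimes> word_prod G ys"
  by (induction xs) (auto simp: m_assoc word_prod_closed)

lemma generate_imp_word_prod:
  assumes "S \<subseteq> carrier G" and "x \<in> generate G S"
  obtains ws where "set ws \<subseteq> word_letters G S" and "word_prod G ws = x"
  using assms(2)
proof (induction arbitrary: thesis rule: generate.induct)
  case one
  show ?case by (rule one[of "[]"]) simp_all
next
  case (incl h)
  show ?case by (rule incl.prems[of "[h]"]) (use incl.hyps assms(1) in auto)
next
  case (inv h)
  show ?case by (rule inv.prems[of "[inv h]"]) (use inv.hyps assms(1) in auto)
next
  case (eng h1 h2)
  obtain w1 where w1: "set w1 \<subseteq> word_letters G S" "word_prod G w1 = h1"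
    using eng.IH(1) by blast
  obtain w2 where w2: "set w2 \<subseteq> word_letters G S" "word_prod G w2 = h2"
    using eng.IH(2) by blast
  have "set w1 \<subseteq> carrier G" "set w2 \<subseteq> carrier G"
    using w1(1) w2(1) assms(1) by auto
  then show ?case
    using w1 w2 by (intro eng.prems[of "w1 @ w2"]) (auto simp: word_prod_append)
qed

lemma word_length_le_length:
  assumes "set ws \<subseteq> word_letters G S"
  shows "word_length G S (word_prod G ws) \<le> length ws"
  unfolding word_length_def word_prod_def
  by (intro Least_le exI[of _ ws]) (use assms in simp)

lemma word_length_attained:
  assumes "S \<subseteq> carrier G" and "x \<in> generate G S"
  obtains ws where "set ws \<subseteq> word_letters G S" and "word_prod G ws = x"
    and "length ws = word_length G S x"
proof -
  obtain ws where "set ws \<subseteq> word_letters G S" "word_prod G ws = x"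
    using generate_imp_word_prod[OF assms] .
  then have "\<exists>ws'. length ws' = length ws \<and> set ws' \<subseteq> word_letters G S \<and>
               foldr (\<lambda>a b. a \<otimes> b) ws' \<one> = x"
    by (auto simp: word_prod_def)
  then have "\<exists>ws'. length ws' = word_length G S x \<and> set ws' \<subseteq> word_letters G S \<and>
               foldr (\<lambda>a b. a \<otimes> b) ws' \<one> = x"
    unfolding word_length_def by (rule LeastI)
  then show thesis
    using that unfolding word_prod_def by blast
qed

lemma word_length_mult_le:
  assumes "S \<subseteq> carrier G" and "x \<in> generate G S" and "y \<in> generate G S"
  shows "word_length G S (x \<otimes> y) \<le> word_length G S x + word_length G S y"
proof -
  obtain v where v: "set v \<subseteq> word_letters G S" "word_prod G v = x" "length v = word_length G S x"
    using word_length_attained[OF assms(1,2)] .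
  obtain w where w: "set w \<subseteq> word_letters G S" "word_prod G w = y" "length w = word_length G S y"
    using word_length_attained[OF assms(1,3)] .
  have "set v \<subseteq> carrier G" "set w \<subseteq> carrier G"
    using v(1) w(1) assms(1) by auto
  then have "x \<otimes> y = word_prod G (v @ w)"
    using v w by (simp add: word_prod_append)
  also have "word_length G S \<dots> \<le> length (v @ w)"
    using v(1) w(1) by (intro word_length_le_length) auto
  finally show ?thesis
    using v w by simp
qed

end

section \<open>Topological groups\<close>

locale top_group =
  fixes E :: "('b, 'n) monoid_scheme" (structure) and T :: "'b topology"
  assumes topological_group: "topological_group E T"
begin

sublocale group E
  using topological_group by (simp add: topological_group_def)

lemma topspace_eq_carrier [simp]: "topspace T = carrier E"
  using topological_group by (simp add: topological_group_def)

lemma continuous_map_group_mult: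
  assumes "continuous_map X T f" and "continuous_map X T g"
  shows "continuous_map X T (\<lambda>x. f x \<otimes> g x)"
proof -
  have "continuous_map X (prod_topology T T) (\<lambda>x. (f x, g x))"
    using assms by (simp add: continuous_map_paired)
  moreover have "continuous_map (prod_topology T T) T (\<lambda>(x, y). x \<otimes> y)"
    using topological_group by (simp add: topological_group_def)
  ultimately show ?thesis
    by (auto dest: continuous_map_compose simp: o_def)
qed

lemma continuous_map_group_inv:
  assumes "continuous_map X T f"
  shows "continuous_map X T (\<lambda>x. inv f x)"
proof -
  have "continuous_map T T (\<lambda>x. inv x)"
    using topological_group by (simp add: topological_group_def)
  with assms show ?thesis
    by (auto dest: continuous_map_compose simp: o_def)
qed

lemma continuous_map_mult_left: "a \<in> carrier E \<Longrightarrow> continuous_map T T (\<lambda>x. a \<otimes> x)"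
  by (intro continuous_map_group_mult continuous_map_id [unfolded id_def]) auto

lemma continuous_map_mult_right: "a \<in> carrier E \<Longrightarrow> continuous_map T T (\<lambda>x. x \<otimes> a)"
  by (intro continuous_map_group_mult continuous_map_id [unfolded id_def]) auto

lemma continuous_map_translations:
  assumes "a \<in> carrier E" and "b \<in> carrier E"
  shows "continuous_map T T (\<lambda>x. a \<otimes> x \<otimes> b)"
  using assms by (intro continuous_map_group_mult continuous_map_id [unfolded id_def]) auto

lemma conj_top_group_aut:
  assumes "c \<in> carrier E"
  shows "top_group_aut E T (\<lambda>x. c \<otimes> x \<otimes> inv c)"
proof -
  have "(\<lambda>x. c \<otimes> x \<otimes> inv c) \<in> hom E E"
    using assms by (intro homI) (simp_all add: m_assoc inv_mult_cancel)
  moreover have "homeomorphic_maps T T (\<lambda>x. c \<otimes> x \<otimes> inv c) (\<lambda>x. inv c \<otimes> x \<otimes> c)"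
    unfolding homeomorphic_maps_def
    using assms by (simp add: continuous_map_translations m_assoc inv_mult_cancel mult_inv_cancel)
  ultimately show ?thesis
    unfolding top_group_aut_def
    by (metis homeomorphic_map_maps homeomorphic_imp_surjective_map homeomorphic_imp_injective_map
        bij_betw_def topspace_eq_carrier)
qed

lemma discrete_subgroup_separating_nbhd:
  assumes "discrete_subgroup E T H"
  obtains V where "openin T V" and "\<one> \<in> V"
    and "\<And>x a b. \<lbrakk>x \<in> carrier E; a \<in> H; b \<in> H; inv x \<otimes> a \<in> V; inv x \<otimes> b \<in> V\<rbrakk> \<Longrightarrow> a = b"
proof -
  have H: "subgroup H E"
    using assms by (simp add: discrete_subgroup_def)
  have "openin (subtopology T H) {\<one>}"
    using assms subgroup.one_closed[OF H] by (simp add: discrete_subgroup_def)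
  then obtain U where U: "openin T U" "{\<one>} = U \<inter> H"
    unfolding openin_subtopology by blast
  define W where "W = {p \<in> topspace (prod_topology T T). inv (fst p) \<otimes> snd p \<in> U}"
  have "continuous_map (prod_topology T T) T (\<lambda>p. inv (fst p) \<otimes> snd p)"
    by (intro continuous_map_group_mult continuous_map_group_inv continuous_map_fst continuous_map_snd)
  then have "openin (prod_topology T T) W"
    unfolding W_def using U(1) by (rule openin_continuous_map_preimage)
  moreover have "(\<one>, \<one>) \<in> W"
    using U(2) by (auto simp: W_def)
  ultimately obtain V1 V2 where V: "openin T V1" "openin T V2" "\<one> \<in> V1" "\<one> \<in> V2" "V1 \<times> V2 \<subseteq> W"
    using openin_prod_topology_alt[THEN iffD1, rule_format] by metis
  show thesis
  proof (rule that[of "V1 \<inter> V2"])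
    show "openin T (V1 \<inter> V2)" "\<one> \<in> V1 \<inter> V2"
      using V by auto
  next
    fix x a b
    assume x: "x \<in> carrier E" and ab: "a \<in> H" "b \<in> H"
      and "inv x \<otimes> a \<in> V1 \<inter> V2" "inv x \<otimes> b \<in> V1 \<inter> V2"
    then have "inv (inv x \<otimes> a) \<otimes> (inv x \<otimes> b) \<in> U"
      using V(5) by (auto simp: W_def)
    moreover have carrier: "a \<in> carrier E" "b \<in> carrier E"
      using ab subgroup.mem_carrier[OF H] by auto
    ultimately have "inv a \<otimes> b \<in> U \<inter> H"
      using x ab H by (simp add: inv_mult_group m_assoc mult_inv_cancel subgroup.m_closed subgroup.m_inv_closed)
    then have "inv a \<otimes> b = \<one>"
      using U(2) by blast
    then show "a = b"
      using carrier by (simp add: inv_solve_left')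
  qed
qed

lemma discrete_subgroup_Int_compactin_finite:
  assumes "discrete_subgroup E T H" and "compactin T C"
  shows "finite (H \<inter> C)"
proof -
  obtain V where V: "openin T V" "\<one> \<in> V"
    and unique: "\<And>x a b. \<lbrakk>x \<in> carrier E; a \<in> H; b \<in> H; inv x \<otimes> a \<in> V; inv x \<otimes> b \<in> V\<rbrakk> \<Longrightarrow> a = b"
    using discrete_subgroup_separating_nbhd[OF assms(1)] by blast
  define N where "N x = {y \<in> topspace T. inv x \<otimes> y \<in> V}" for x
  have C: "C \<subseteq> carrier E"
    using compactin_subset_topspace[OF assms(2)] by simp
  have "openin T (N x)" if "x \<in> C" for x
    unfolding N_def
    by (rule openin_continuous_map_preimage[OF continuous_map_mult_left V(1)]) (use C that in auto)
  moreover have "x \<in> N x" if "x \<in> C" for x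
    using that C V(2) by (auto simp: N_def)
  then have "C \<subseteq> (\<Union>x\<in>C. N x)"
    by blast
  ultimately obtain F where F: "finite F" "F \<subseteq> C" "C \<subseteq> (\<Union>x\<in>F. N x)"
    using compactin_finite_subcover_indexed[OF assms(2)] by metis
  have "finite (H \<inter> N x)" if "x \<in> F" for x
  proof (cases "H \<inter> N x = {}")
    case False
    then obtain a where "a \<in> H \<inter> N x"
      by blast
    then have "H \<inter> N x \<subseteq> {a}"
      using unique[of x a] F(2) C that by (auto simp: N_def)
    then show ?thesis
      by (rule finite_subset) simp
  qed simp
  then have "finite (\<Union>x\<in>F. H \<inter> N x)"
    using F(1) by blast
  then show ?thesis
    by (rule finite_subset[rotated]) (use F(3) in blast)
qed

lemma openin_coset_saturation:
  assumes H: "subgroup H E" and U: "openin T U"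
  shows "openin T {y \<in> topspace T. y <#\<^bsub>E\<^esub> H \<in> (\<lambda>u. u <#\<^bsub>E\<^esub> H) ` U}"
proof -
  have U_carrier: "U \<subseteq> carrier E"
    using openin_subset[OF U] by simp
  have "{y \<in> topspace T. y <#\<^bsub>E\<^esub> H \<in> (\<lambda>u. u <#\<^bsub>E\<^esub> H) ` U} = (\<Union>h\<in>H. {y \<in> topspace T. y \<otimes> h \<in> U})"
  proof (intro equalityI subsetI)
    fix y
    assume "y \<in> {y \<in> topspace T. y <#\<^bsub>E\<^esub> H \<in> (\<lambda>u. u <#\<^bsub>E\<^esub> H) ` U}"
    then obtain u where y: "y \<in> carrier E" and u: "u \<in> U" "y <#\<^bsub>E\<^esub> H = u <#\<^bsub>E\<^esub> H"
      by auto
    have "u \<in> u <#\<^bsub>E\<^esub> H"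
      using subgroup.one_closed[OF H] u(1) U_carrier unfolding l_coset_def by force
    then obtain h where "h \<in> H" "u = y \<otimes> h"
      using u(2) unfolding l_coset_def by auto
    then show "y \<in> (\<Union>h\<in>H. {y \<in> topspace T. y \<otimes> h \<in> U})"
      using y u(1) by auto
  next
    fix y
    assume "y \<in> (\<Union>h\<in>H. {y \<in> topspace T. y \<otimes> h \<in> U})"
    then obtain h where h: "h \<in> H" and y: "y \<in> carrier E" "y \<otimes> h \<in> U"
      by auto
    have "y <#\<^bsub>E\<^esub> H = (y \<otimes> h) <#\<^bsub>E\<^esub> H"
      using h y(1) H by (intro l_repr_independence) (auto simp: l_coset_def)
    then show "y \<in> {y \<in> topspace T. y <#\<^bsub>E\<^esub> H \<in> (\<lambda>u. u <#\<^bsub>E\<^esub> H) ` U}"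
      using y by auto
  qed
  moreover have "openin T {y \<in> topspace T. y \<otimes> h \<in> U}" if "h \<in> H" for h
    by (rule openin_continuous_map_preimage[OF continuous_map_mult_right U])
      (use that subgroup.mem_carrier[OF H] in auto)
  ultimately show ?thesis
    by (auto intro: openin_Union)
qed

lemma cocompact_subgroup_compact_cover:
  assumes "locally_compact_space T" and "cocompact_subgroup E T H"
  obtains K where "compactin T K" and "\<And>e. e \<in> carrier E \<Longrightarrow> \<exists>k\<in>K. \<exists>h\<in>H. e = k \<otimes> h"
proof -
  have H: "subgroup H E"
    using assms(2) by (simp add: cocompact_subgroup_def)
  obtain Q :: "'b set topology" where Q: "quotient_map T Q (\<lambda>e. e <#\<^bsub>E\<^esub> H)" "compact_space Q"
    using assms(2) by (auto simp: cocompact_subgroup_def)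
  define \<pi> where "\<pi> e = e <#\<^bsub>E\<^esub> H" for e
  have "\<forall>x\<in>carrier E. \<exists>U K'. openin T U \<and> compactin T K' \<and> x \<in> U \<and> U \<subseteq> K'"
    using assms(1) by (simp add: locally_compact_space_def)
  then obtain U K' where UK: "\<And>x. x \<in> carrier E \<Longrightarrow>
      openin T (U x) \<and> compactin T (K' x) \<and> x \<in> U x \<and> U x \<subseteq> K' x"
    by metis
  have image: "\<pi> ` carrier E = topspace Q"
    using Q(1) by (simp add: quotient_map_def \<pi>_def)
  have "openin Q (\<pi> ` U x)" if "x \<in> carrier E" for x
  proof -
    have "openin T {y \<in> topspace T. \<pi> y \<in> \<pi> ` U x}"
      unfolding \<pi>_def using H UK[OF that] by (intro openin_coset_saturation) auto
    moreover have "\<pi> ` U x \<subseteq> topspace Q"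
      using image UK[OF that] openin_subset by fastforce
    ultimately show ?thesis
      using Q(1) by (simp add: quotient_map_def \<pi>_def)
  qed
  moreover have "topspace Q \<subseteq> (\<Union>x\<in>carrier E. \<pi> ` U x)"
  proof
    fix q
    assume "q \<in> topspace Q"
    then obtain x where "x \<in> carrier E" "q = \<pi> x"
      using image by blast
    then show "q \<in> (\<Union>x\<in>carrier E. \<pi> ` U x)"
      using UK by blast
  qed
  ultimately obtain F where F: "finite F" "F \<subseteq> carrier E" "topspace Q \<subseteq> (\<Union>x\<in>F. \<pi> ` U x)"
    by (rule compactin_finite_subcover_indexed[OF Q(2)[unfolded compact_space_def]])
  show thesis
  proof (rule that[of "\<Union>x\<in>F. K' x"])
    show "compactin T (\<Union>x\<in>F. K' x)"
      using F UK by (intro compactin_Union) auto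
  next
    fix e
    assume e: "e \<in> carrier E"
    then have "\<pi> e \<in> topspace Q"
      using image by blast
    then obtain x u where x: "x \<in> F" and u: "u \<in> U x" "\<pi> e = \<pi> u"
      using F(3) by blast
    have "e \<in> \<pi> e"
      using e subgroup.one_closed[OF H] unfolding \<pi>_def l_coset_def by force
    then have "e \<in> u <#\<^bsub>E\<^esub> H"
      using u(2) by (simp add: \<pi>_def)
    then obtain h where "h \<in> H" "e = u \<otimes> h"
      unfolding l_coset_def by blast
    moreover have "u \<in> (\<Union>x\<in>F. K' x)"
      using UK[of x] x u(1) F(2) by blast
    ultimately show "\<exists>k\<in>\<Union>x\<in>F. K' x. \<exists>h\<in>H. e = k \<otimes> h"
      by blast
  qed
qed

lemma cocompact_subgroup_symmetric_compact_cover: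
  assumes "locally_compact_space T" and "cocompact_subgroup E T H"
  obtains K where "compactin T K" and "\<And>k. k \<in> K \<Longrightarrow> inv k \<in> K"
    and "\<And>e. e \<in> carrier E \<Longrightarrow> \<exists>h\<in>H. \<exists>k\<in>K. h = e \<otimes> k"
proof -
  obtain K0 where K0: "compactin T K0" and cover: "\<And>e. e \<in> carrier E \<Longrightarrow> \<exists>k\<in>K0. \<exists>h\<in>H. e = k \<otimes> h"
    using cocompact_subgroup_compact_cover[OF assms] by blast
  have K0_carrier: "K0 \<subseteq> carrier E"
    using compactin_subset_topspace[OF K0] by simp
  have H: "H \<subseteq> carrier E"
    using assms(2) by (simp add: cocompact_subgroup_def subgroup.subset)
  show thesis
  proof (rule that[of "K0 \<union> (\<lambda>k. inv k) ` K0"])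
    have "compactin T ((\<lambda>k. inv k) ` K0)"
      using K0 by (rule image_compactin) (intro continuous_map_group_inv continuous_map_id [unfolded id_def])
    then show "compactin T (K0 \<union> (\<lambda>k. inv k) ` K0)"
      using K0 by (rule compactin_Un[rotated])
    show "inv k \<in> K0 \<union> (\<lambda>k. inv k) ` K0" if "k \<in> K0 \<union> (\<lambda>k. inv k) ` K0" for k
      using that K0_carrier by auto
  next
    fix e
    assume e: "e \<in> carrier E"
    then obtain k h where kh: "k \<in> K0" "h \<in> H" "inv e = k \<otimes> h"
      using cover[of "inv e"] by blast
    have carrier: "k \<in> carrier E" "h \<in> carrier E"
      using kh K0_carrier H by auto
    have "inv h = inv h \<otimes> inv k \<otimes> k"
      using carrier by (simp add: m_assoc)
    also have "inv h \<otimes> inv k = e"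
      using carrier e by (simp add: inv_mult_group[symmetric] kh(3)[symmetric])
    finally have "inv h = e \<otimes> k" .
    moreover have "inv h \<in> H"
      using assms(2) kh(2) by (simp add: cocompact_subgroup_def subgroup.m_inv_closed)
    ultimately show "\<exists>h\<in>H. \<exists>k'\<in>K0 \<union> (\<lambda>k. inv k) ` K0. h = e \<otimes> k'"
      using kh(1) by blast
  qed
qed

end

section \<open>Uniform lattices and word metrics\<close>

locale uniform_lattice_hom = top_group E T
  for E :: "('b, 'n) monoid_scheme" (structure) and T +
  fixes G :: "('a, 'm) monoid_scheme" and L :: "'a set" and \<phi> :: "'a \<Rightarrow> 'b"
    and K :: "'b set" and S :: "'a set"
  assumes group_G: "group G" and subgroup_L: "subgroup L G" and hom: "\<phi> \<in> hom G E"
    and finite_kernel: "finite {h \<in> L. \<phi> h = \<one>}"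
    and discrete: "discrete_subgroup E T (\<phi> ` L)"
    and compact_K: "compactin T K" and inv_K: "\<And>k. k \<in> K \<Longrightarrow> inv k \<in> K"
    and cover: "\<And>e. e \<in> carrier E \<Longrightarrow> \<exists>h\<in>L. \<exists>k\<in>K. \<phi> h = e \<otimes> k"
    and finite_S: "finite S" and S_L: "S \<subseteq> L" and generate_S: "generate G S = L"
begin

sublocale phi: group_hom G E \<phi>
  using group_G hom by (simp add: group_hom_def group_hom_axioms_def is_group)

lemma L_carrier: "L \<subseteq> carrier G"
  using subgroup_L by (rule subgroup.subset)

lemma K_carrier: "K \<subseteq> carrier E"
  using compactin_subset_topspace[OF compact_K] by simp

lemma word_letters_L: "word_letters G S \<subseteq> L"
  using S_L subgroup.m_inv_closed[OF subgroup_L] by blast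

lemma word_length_mult_L:
  "x \<in> L \<Longrightarrow> y \<in> L \<Longrightarrow> word_length G S (x \<otimes>\<^bsub>G\<^esub> y) \<le> word_length G S x + word_length G S y"
  using group.word_length_mult_le[OF group_G] S_L L_carrier generate_S by (metis order_trans)

lemma finite_lattice_points: "compactin T C \<Longrightarrow> finite {x \<in> L. \<phi> x \<in> C}"
  by (rule phi.finite_subgroup_preimage[OF subgroup_L finite_kernel
        discrete_subgroup_Int_compactin_finite[OF discrete]])

definition step_set :: "'b set" where
  "step_set = (\<Union>s \<in> insert \<one>\<^bsub>G\<^esub> (word_letters G S). (\<lambda>(k, k'). k \<otimes> \<phi> s \<otimes> k') ` (K \<times> K))"

definition max_word_length :: "'b set \<Rightarrow> nat" where
  "max_word_length C = Max (insert 0 (word_length G S ` {x \<in> L. \<phi> x \<in> C}))"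

lemma word_length_le_max_word_length:
  "compactin T C \<Longrightarrow> x \<in> L \<Longrightarrow> \<phi> x \<in> C \<Longrightarrow> word_length G S x \<le> max_word_length C"
  unfolding max_word_length_def using finite_lattice_points by (intro Max_ge) auto

abbreviation step_bound :: nat where
  "step_bound \<equiv> max_word_length step_set"

lemma step_setI:
  "k \<in> K \<Longrightarrow> s \<in> insert \<one>\<^bsub>G\<^esub> (word_letters G S) \<Longrightarrow> k' \<in> K \<Longrightarrow> k \<otimes> \<phi> s \<otimes> k' \<in> step_set"
  unfolding step_set_def by (rule UN_I[of s]) (auto intro: image_eqI[of _ _ "(k, k')"])

lemma compactin_step_set: "compactin T step_set"
  unfolding step_set_def
proof (intro compactin_Union ballI)
  show "finite ((\<lambda>s. (\<lambda>(k, k'). k \<otimes> \<phi> s \<otimes> k') ` (K \<times> K)) ` insert \<one>\<^bsub>G\<^esub> (word_letters G S))"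
    using finite_S by simp
next
  fix C
  assume "C \<in> (\<lambda>s. (\<lambda>(k, k'). k \<otimes> \<phi> s \<otimes> k') ` (K \<times> K)) ` insert \<one>\<^bsub>G\<^esub> (word_letters G S)"
  then obtain s where s: "s \<in> carrier G" and C: "C = (\<lambda>(k, k'). k \<otimes> \<phi> s \<otimes> k') ` (K \<times> K)"
    using word_letters_L L_carrier by blast
  have "continuous_map (prod_topology T T) T (\<lambda>(k, k'). k \<otimes> \<phi> s \<otimes> k')"
    unfolding case_prod_unfold using s
    by (intro continuous_map_group_mult continuous_map_fst continuous_map_snd) auto
  then show "compactin T C"
    unfolding C using compact_K by (intro image_compactin) (auto simp: compactin_Times)
qed

lemma word_length_le_word_sandwich:
  assumes "set ws \<subseteq> word_letters G S" and "x \<in> L" and "k \<in> K" and "k' \<in> K"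
    and "\<phi> x = k \<otimes> \<phi> (word_prod G ws) \<otimes> k'"
  shows "word_length G S x \<le> step_bound * (length ws + 1)"
  using assms
proof (induction ws arbitrary: x k)
  case Nil
  then have "\<phi> x \<in> step_set"
    using step_setI[of k "\<one>\<^bsub>G\<^esub>" k'] by simp
  then show ?case
    using Nil.prems(2) word_length_le_max_word_length[OF compactin_step_set] by simp
next
  case (Cons s ws)
  have "s \<in> L" "set ws \<subseteq> L"
    using Cons.prems(1) word_letters_L by auto
  then have s: "s \<in> L" "s \<in> carrier G" and ws: "set ws \<subseteq> carrier G"
    using L_carrier by auto
  have k: "k \<in> carrier E" "k' \<in> carrier E"
    using Cons.prems(3,4) K_carrier by auto
  \<comment> \<open>Peel off the first letter: the lattice point x1 near k \<phi>(s) lies in the step set,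
    and inv x1 \<otimes> x is handled by the shorter word.\<close>
  obtain x1 k1 where x1: "x1 \<in> L" "k1 \<in> K" "\<phi> x1 = k \<otimes> \<phi> s \<otimes> k1"
    using cover[of "k \<otimes> \<phi> s"] k s by auto
  have x1_carrier: "x1 \<in> carrier G" "k1 \<in> carrier E"
    using x1 L_carrier K_carrier by auto
  have "\<phi> x1 \<in> step_set"
    using x1 Cons.prems(1,3) by (simp add: step_setI)
  then have "word_length G S x1 \<le> step_bound"
    by (rule word_length_le_max_word_length[OF compactin_step_set x1(1)])
  define x' where "x' = inv\<^bsub>G\<^esub> x1 \<otimes>\<^bsub>G\<^esub> x"
  have x'_L: "x' \<in> L"
    unfolding x'_def using x1(1) Cons.prems(2)
    by (intro subgroup.m_closed[OF subgroup_L] subgroup.m_inv_closed[OF subgroup_L])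
  have x_carrier: "x \<in> carrier G"
    using Cons.prems(2) L_carrier by auto
  have "\<phi> x' = inv k1 \<otimes> \<phi> (word_prod G ws) \<otimes> k'"
    using Cons.prems(5) x1(3) x1_carrier x_carrier k s ws
    by (simp add: x'_def inv_mult_group m_assoc inv_mult_cancel group.word_prod_closed[OF group_G])
  then have "word_length G S x' \<le> step_bound * (length ws + 1)"
    using Cons.prems(1,4) x'_L inv_K[OF x1(2)] by (intro Cons.IH) auto
  moreover have "x = x1 \<otimes>\<^bsub>G\<^esub> x'"
    unfolding x'_def using x1_carrier x_carrier by (simp add: group.mult_inv_cancel[OF group_G])
  ultimately show ?case
    using word_length_mult_L[OF x1(1) x'_L] \<open>word_length G S x1 \<le> step_bound\<close> by simp
qed

lemma word_length_le_sandwich: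
  assumes "x \<in> L" and "m \<in> L" and "k \<in> K" and "k' \<in> K" and "\<phi> x = k \<otimes> \<phi> m \<otimes> k'"
  shows "word_length G S x \<le> step_bound * (word_length G S m + 1)"
proof -
  have "S \<subseteq> carrier G" "m \<in> generate G S"
    using S_L L_carrier assms(2) generate_S by auto
  then obtain ws where ws: "set ws \<subseteq> word_letters G S" "word_prod G ws = m"
    "length ws = word_length G S m"
    by (rule group.word_length_attained[OF group_G])
  show ?thesis
    using word_length_le_word_sandwich[OF ws(1) assms(1,3,4)] assms(5) ws(2,3) by simp
qed

definition lattice_translate :: "'b \<Rightarrow> 'a \<Rightarrow> 'a" where
  "lattice_translate c h = (SOME x. x \<in> L \<and> (\<exists>k\<in>K. \<phi> x = c \<otimes> \<phi> h \<otimes> k))"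

lemma lattice_translate_spec:
  assumes "c \<in> carrier E" and "h \<in> L"
  shows "lattice_translate c h \<in> L" and "\<exists>k\<in>K. \<phi> (lattice_translate c h) = c \<otimes> \<phi> h \<otimes> k"
proof -
  have "c \<otimes> \<phi> h \<in> carrier E"
    using assms L_carrier by auto
  then have "\<exists>x. x \<in> L \<and> (\<exists>k\<in>K. \<phi> x = c \<otimes> \<phi> h \<otimes> k)"
    using cover by blast
  then have "lattice_translate c h \<in> L \<and> (\<exists>k\<in>K. \<phi> (lattice_translate c h) = c \<otimes> \<phi> h \<otimes> k)"
    unfolding lattice_translate_def by (rule someI_ex)
  then show "lattice_translate c h \<in> L" and "\<exists>k\<in>K. \<phi> (lattice_translate c h) = c \<otimes> \<phi> h \<otimes> k"
    by blast+
qed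

lemma word_length_lattice_translate_le:
  assumes "c \<in> carrier E" and "h1 \<in> L" and "h2 \<in> L"
  defines "f \<equiv> lattice_translate c"
  shows "word_length G S (inv\<^bsub>G\<^esub> f h1 \<otimes>\<^bsub>G\<^esub> f h2)
           \<le> step_bound * (word_length G S (inv\<^bsub>G\<^esub> h1 \<otimes>\<^bsub>G\<^esub> h2) + 1)"
    and "word_length G S (inv\<^bsub>G\<^esub> h1 \<otimes>\<^bsub>G\<^esub> h2)
           \<le> step_bound * (word_length G S (inv\<^bsub>G\<^esub> f h1 \<otimes>\<^bsub>G\<^esub> f h2) + 1)"
proof -
  obtain k1 where k1: "k1 \<in> K" "\<phi> (f h1) = c \<otimes> \<phi> h1 \<otimes> k1"
    using lattice_translate_spec(2)[OF assms(1,2)] unfolding f_def by blast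
  obtain k2 where k2: "k2 \<in> K" "\<phi> (f h2) = c \<otimes> \<phi> h2 \<otimes> k2"
    using lattice_translate_spec(2)[OF assms(1,3)] unfolding f_def by blast
  have L: "f h1 \<in> L" "f h2 \<in> L" "inv\<^bsub>G\<^esub> f h1 \<otimes>\<^bsub>G\<^esub> f h2 \<in> L" "inv\<^bsub>G\<^esub> h1 \<otimes>\<^bsub>G\<^esub> h2 \<in> L"
    using lattice_translate_spec(1) assms(1-3) subgroup.m_closed[OF subgroup_L] subgroup.m_inv_closed[OF subgroup_L]
    unfolding f_def by auto
  have carrier: "\<phi> h1 \<in> carrier E" "\<phi> h2 \<in> carrier E" "k1 \<in> carrier E" "k2 \<in> carrier E"
    using assms(2,3) k1(1) k2(1) L_carrier K_carrier by auto
  have forward: "\<phi> (inv\<^bsub>G\<^esub> f h1 \<otimes>\<^bsub>G\<^esub> f h2) = inv k1 \<otimes> \<phi> (inv\<^bsub>G\<^esub> h1 \<otimes>\<^bsub>G\<^esub> h2) \<otimes> k2"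
    using k1(2) k2(2) carrier assms(1-3) L(1,2) L_carrier
    by (simp add: inv_mult_group m_assoc inv_mult_cancel subsetD)
  then have backward: "\<phi> (inv\<^bsub>G\<^esub> h1 \<otimes>\<^bsub>G\<^esub> h2) = k1 \<otimes> \<phi> (inv\<^bsub>G\<^esub> f h1 \<otimes>\<^bsub>G\<^esub> f h2) \<otimes> inv k2"
    using carrier L(4) L_carrier by (simp add: m_assoc mult_inv_cancel subsetD)
  show "word_length G S (inv\<^bsub>G\<^esub> f h1 \<otimes>\<^bsub>G\<^esub> f h2)
           \<le> step_bound * (word_length G S (inv\<^bsub>G\<^esub> h1 \<otimes>\<^bsub>G\<^esub> h2) + 1)"
    by (rule word_length_le_sandwich[OF L(3,4) inv_K[OF k1(1)] k2(1) forward])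
  show "word_length G S (inv\<^bsub>G\<^esub> h1 \<otimes>\<^bsub>G\<^esub> h2)
           \<le> step_bound * (word_length G S (inv\<^bsub>G\<^esub> f h1 \<otimes>\<^bsub>G\<^esub> f h2) + 1)"
    by (rule word_length_le_sandwich[OF L(4,3) k1(1) inv_K[OF k2(1)] backward])
qed

lemma lattice_translate_coarsely_surj:
  assumes "c \<in> carrier E" and "y \<in> L"
  obtains h where "h \<in> L"
    and "word_length G S (inv\<^bsub>G\<^esub> lattice_translate c h \<otimes>\<^bsub>G\<^esub> y) \<le> step_bound"
proof -
  have y: "y \<in> carrier G"
    using assms(2) L_carrier by auto
  then obtain h k where hk: "h \<in> L" "k \<in> K" "\<phi> h = inv c \<otimes> \<phi> y \<otimes> k"
    using cover[of "inv c \<otimes> \<phi> y"] assms(1) by auto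
  obtain k' where k': "k' \<in> K" "\<phi> (lattice_translate c h) = c \<otimes> \<phi> h \<otimes> k'"
    using lattice_translate_spec(2)[OF assms(1) hk(1)] by blast
  have translate: "lattice_translate c h \<in> L" "lattice_translate c h \<in> carrier G"
    using lattice_translate_spec(1)[OF assms(1) hk(1)] L_carrier by auto
  have carrier: "k \<in> carrier E" "k' \<in> carrier E"
    using hk(2) k'(1) K_carrier by auto
  have "\<phi> (inv\<^bsub>G\<^esub> lattice_translate c h \<otimes>\<^bsub>G\<^esub> y) = inv k' \<otimes> \<phi> \<one>\<^bsub>G\<^esub> \<otimes> inv k"
    using k'(2) hk(3) assms(1) y translate(2) carrier
    by (simp add: inv_mult_group m_assoc inv_mult_cancel mult_inv_cancel)
  then have "\<phi> (inv\<^bsub>G\<^esub> lattice_translate c h \<otimes>\<^bsub>G\<^esub> y) \<in> step_set"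
    using step_setI[of "inv k'" "\<one>\<^bsub>G\<^esub>" "inv k"] inv_K hk(2) k'(1) by simp
  moreover have "inv\<^bsub>G\<^esub> lattice_translate c h \<otimes>\<^bsub>G\<^esub> y \<in> L"
    using translate(1) assms(2) subgroup.m_closed[OF subgroup_L] subgroup.m_inv_closed[OF subgroup_L] by auto
  ultimately show thesis
    using that[OF hk(1)] word_length_le_max_word_length[OF compactin_step_set] by blast
qed

lemma quasi_isometry_lattice_translate:
  assumes "c \<in> carrier E"
  defines "M \<equiv> real step_bound + 1"
  shows "quasi_isometry (word_dist G S) L M M (lattice_translate c)"
  unfolding quasi_isometry_def
proof (intro conjI ballI)
  show "1 \<le> M" and "0 \<le> M"
    unfolding M_def by simp_all
  show "lattice_translate c ` L \<subseteq> L"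
    using lattice_translate_spec(1)[OF assms(1)] by blast
next
  fix x y
  assume "x \<in> L" and "y \<in> L"
  from coarse_bilipschitz_bounds[OF word_length_lattice_translate_le[OF assms(1) this]]
  show "word_dist G S x y / M - M \<le> word_dist G S (lattice_translate c x) (lattice_translate c y)"
    and "word_dist G S (lattice_translate c x) (lattice_translate c y) \<le> M * word_dist G S x y + M"
    unfolding word_dist_def M_def by simp_all
next
  fix y
  assume "y \<in> L"
  then obtain h where "h \<in> L"
    "word_length G S (inv\<^bsub>G\<^esub> lattice_translate c h \<otimes>\<^bsub>G\<^esub> y) \<le> step_bound"
    using lattice_translate_coarsely_surj[OF assms(1)] by blast
  then show "\<exists>x\<in>L. word_dist G S (lattice_translate c x) y \<le> M"
    unfolding word_dist_def M_def by force
qed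

lemma lattice_translate_close_to_conj:
  assumes "g \<in> carrier G"
  shows "\<exists>C. \<forall>h \<in> L \<inter> conj_set G (inv\<^bsub>G\<^esub> g) L.
           word_dist G S (lattice_translate (\<phi> g) h) (g \<otimes>\<^bsub>G\<^esub> h \<otimes>\<^bsub>G\<^esub> inv\<^bsub>G\<^esub> g) \<le> C"
proof -
  define c where "c = \<phi> g"
  have c: "c \<in> carrier E" "inv c \<in> carrier E"
    unfolding c_def using assms by simp_all
  define D where "D = (\<lambda>k. k \<otimes> inv c) ` K"
  have D: "compactin T D"
    unfolding D_def using compact_K continuous_map_mult_right[OF c(2)] by (rule image_compactin)
  have "word_dist G S (lattice_translate c h) (g \<otimes>\<^bsub>G\<^esub> h \<otimes>\<^bsub>G\<^esub> inv\<^bsub>G\<^esub> g) \<le> max_word_length D"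
    if h: "h \<in> L \<inter> conj_set G (inv\<^bsub>G\<^esub> g) L" for h
  proof -
    define l where "l = g \<otimes>\<^bsub>G\<^esub> h \<otimes>\<^bsub>G\<^esub> inv\<^bsub>G\<^esub> g"
    have l: "l \<in> L" "\<phi> l = c \<otimes> \<phi> h \<otimes> inv c"
      using group.conj_set_inv_conj_mem[OF group_G assms L_carrier] h L_carrier assms
      unfolding l_def c_def by auto
    obtain k where k: "k \<in> K" "\<phi> (lattice_translate c h) = c \<otimes> \<phi> h \<otimes> k"
      using lattice_translate_spec(2)[OF c(1)] h by blast
    have translate: "lattice_translate c h \<in> L" "lattice_translate c h \<in> carrier G"
      using lattice_translate_spec(1)[OF c(1)] h L_carrier by auto
    have carrier: "\<phi> h \<in> carrier E" "k \<in> carrier E"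
      using h k(1) L_carrier K_carrier by auto
    have "\<phi> (inv\<^bsub>G\<^esub> lattice_translate c h \<otimes>\<^bsub>G\<^esub> l) = inv k \<otimes> inv c"
      using k(2) l(2) l(1) L_carrier translate(2) carrier c(1)
      by (simp add: subsetD inv_mult_group m_assoc inv_mult_cancel)
    then have "\<phi> (inv\<^bsub>G\<^esub> lattice_translate c h \<otimes>\<^bsub>G\<^esub> l) \<in> D"
      unfolding D_def using inv_K[OF k(1)] by blast
    moreover have "inv\<^bsub>G\<^esub> lattice_translate c h \<otimes>\<^bsub>G\<^esub> l \<in> L"
      using translate(1) l(1) subgroup.m_closed[OF subgroup_L] subgroup.m_inv_closed[OF subgroup_L] by auto
    ultimately show ?thesis
      using word_length_le_max_word_length[OF D] unfolding word_dist_def l_def by simp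
  qed
  then show ?thesis
    unfolding c_def by blast
qed

end

lemma engulfing_group_of_hom:
  assumes hecke: "hecke_pair G L" and "topological_group E T" and hom: "\<phi> \<in> hom G E"
    and "vule G L E T \<phi>"
  shows "engulfing_group G L E T"
proof -
  interpret E: top_group E T
    by (rule top_group.intro) fact
  have G: "group G" and L: "L \<subseteq> carrier G"
    using hecke by (auto simp: hecke_pair_def subgroup.subset)
  interpret phi: group_hom G E \<phi>
    using G hom by (simp add: group_hom_def group_hom_axioms_def E.is_group)
  show ?thesis
    unfolding engulfing_group_def
  proof (intro exI[of _ \<phi>] exI[of _ "\<lambda>g e. \<phi> g \<otimes>\<^bsub>E\<^esub> e \<otimes>\<^bsub>E\<^esub> inv\<^bsub>E\<^esub> \<phi> g"] conjI ballI)
    show "vule G L E T \<phi>" by fact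
  next
    fix g
    assume "g \<in> carrier G"
    then show "top_group_aut E T (\<lambda>e. \<phi> g \<otimes>\<^bsub>E\<^esub> e \<otimes>\<^bsub>E\<^esub> inv\<^bsub>E\<^esub> \<phi> g)"
      by (simp add: E.conj_top_group_aut)
  next
    fix g1 g2 e
    assume "g1 \<in> carrier G" "g2 \<in> carrier G" "e \<in> carrier E"
    then show "\<phi> (g1 \<otimes>\<^bsub>G\<^esub> g2) \<otimes>\<^bsub>E\<^esub> e \<otimes>\<^bsub>E\<^esub> inv\<^bsub>E\<^esub> \<phi> (g1 \<otimes>\<^bsub>G\<^esub> g2)
        = \<phi> g1 \<otimes>\<^bsub>E\<^esub> (\<phi> g2 \<otimes>\<^bsub>E\<^esub> e \<otimes>\<^bsub>E\<^esub> inv\<^bsub>E\<^esub> \<phi> g2) \<otimes>\<^bsub>E\<^esub> inv\<^bsub>E\<^esub> \<phi> g1"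
      by (simp add: E.m_assoc E.inv_mult_group)
  next
    fix h e
    show "\<phi> h \<otimes>\<^bsub>E\<^esub> e \<otimes>\<^bsub>E\<^esub> inv\<^bsub>E\<^esub> \<phi> h = \<phi> h \<otimes>\<^bsub>E\<^esub> e \<otimes>\<^bsub>E\<^esub> inv\<^bsub>E\<^esub> \<phi> h" ..
  next
    fix g
    assume g: "g \<in> carrier G"
    then have "finite_index_in G (L \<inter> conj_set G (inv\<^bsub>G\<^esub> g) L) L"
      using hecke by (simp add: hecke_pair_def)
    moreover have "g \<otimes>\<^bsub>G\<^esub> h \<otimes>\<^bsub>G\<^esub> inv\<^bsub>G\<^esub> g \<in> L \<and>
        \<phi> g \<otimes>\<^bsub>E\<^esub> \<phi> h \<otimes>\<^bsub>E\<^esub> inv\<^bsub>E\<^esub> \<phi> g = \<phi> (g \<otimes>\<^bsub>G\<^esub> h \<otimes>\<^bsub>G\<^esub> inv\<^bsub>G\<^esub> g)"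
      if "h \<in> L \<inter> conj_set G (inv\<^bsub>G\<^esub> g) L" for h
      using that g L group.conj_set_inv_conj_mem[OF G g L] by auto
    ultimately show "\<exists>L'. finite_index_in G L' L \<and>
        (\<forall>h\<in>L'. g \<otimes>\<^bsub>G\<^esub> h \<otimes>\<^bsub>G\<^esub> inv\<^bsub>G\<^esub> g \<in> L \<and>
          \<phi> g \<otimes>\<^bsub>E\<^esub> \<phi> h \<otimes>\<^bsub>E\<^esub> inv\<^bsub>E\<^esub> \<phi> g = \<phi> (g \<otimes>\<^bsub>G\<^esub> h \<otimes>\<^bsub>G\<^esub> inv\<^bsub>G\<^esub> g))"
      by blast
  qed
qed

lemma uniformly_commensurated_of_hom:
  assumes "group G" and "subgroup L G" and "locally_compact_group E T" and "\<phi> \<in> hom G E"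
    and vule: "vule G L E T \<phi>"
  shows "uniformly_commensurated G L"
proof -
  have "topological_group E T" and lc: "locally_compact_space T"
    using assms(3) by (simp_all add: locally_compact_group_def)
  then interpret E: top_group E T
    by (intro top_group.intro)
  have "cocompact_subgroup E T (\<phi> ` L)"
    using vule by (simp add: vule_def)
  then obtain K where K: "compactin T K" "\<And>k. k \<in> K \<Longrightarrow> inv\<^bsub>E\<^esub> k \<in> K"
    and cover: "\<And>e. e \<in> carrier E \<Longrightarrow> \<exists>h\<in>\<phi> ` L. \<exists>k\<in>K. h = e \<otimes>\<^bsub>E\<^esub> k"
    using E.cocompact_subgroup_symmetric_compact_cover[OF lc] by blast
  have cover_L: "\<exists>h\<in>L. \<exists>k\<in>K. \<phi> h = e \<otimes>\<^bsub>E\<^esub> k" if "e \<in> carrier E" for e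
    using cover[OF that] by blast
  show ?thesis
    unfolding uniformly_commensurated_def
  proof (intro allI impI)
    fix S
    assume "finite S \<and> S \<subseteq> L \<and> generate G S = L"
    then interpret uniform_lattice_hom E T G L \<phi> K S
      using assms(1,2,4) K cover_L vule
      by (intro uniform_lattice_hom.intro E.top_group_axioms uniform_lattice_hom_axioms.intro)
        (simp_all add: vule_def)
    show "\<exists>K A. \<forall>g\<in>carrier G. \<exists>f. quasi_isometry (word_dist G S) L K A f \<and>
        (\<exists>C. \<forall>h\<in>L \<inter> conj_set G (inv\<^bsub>G\<^esub> g) L.
               word_dist G S (f h) (g \<otimes>\<^bsub>G\<^esub> h \<otimes>\<^bsub>G\<^esub> inv\<^bsub>G\<^esub> g) \<le> C)"
    proof (rule exI, rule exI, rule ballI)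
      fix g
      assume g: "g \<in> carrier G"
      then have "\<phi> g \<in> carrier E"
        by simp
      then show "\<exists>f. quasi_isometry (word_dist G S) L (real step_bound + 1)
            (real step_bound + 1) f \<and>
          (\<exists>C. \<forall>h\<in>L \<inter> conj_set G (inv\<^bsub>G\<^esub> g) L.
               word_dist G S (f h) (g \<otimes>\<^bsub>G\<^esub> h \<otimes>\<^bsub>G\<^esub> inv\<^bsub>G\<^esub> g) \<le> C)"
        using quasi_isometry_lattice_translate lattice_translate_close_to_conj[OF g] by blast
    qed
  qed
qed

theorem lemma3p8:
  fixes G :: "('a, 'm) monoid_scheme" and L :: "'a set"
    and E :: "('b, 'n) monoid_scheme" and T :: "'b topology" and \<phi> :: "'a \<Rightarrow> 'b"
  assumes "hecke_pair G L"
    and "finitely_generated_subgroup G L"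
    and "locally_compact_group E T"
    and "\<phi> \<in> hom G E"
    and "vule G L E T \<phi>"
  shows "engulfing_group G L E T \<and> uniformly_commensurated G L"
proof
  show "engulfing_group G L E T"
    using assms(1,3-5) by (intro engulfing_group_of_hom) (auto simp: locally_compact_group_def)
  show "uniformly_commensurated G L"
    using assms(1,3-5) by (intro uniformly_commensurated_of_hom) (auto simp: hecke_pair_def)
qed

end
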